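(* Let $V\sim\mathrm{Exp}(\lambda)$, let $V_1,V_2$ be independent copies of $V$, and write $V_{(1:2)}=\min(V_1,V_2)$, $V_{(2:2)}=\max(V_1,V_2)$. For $p_0\ge 0$ and $r\in[0,1]$ define $$R(p_0,r)=\begin{cases}2p_0+2r\,\mathbb{E}[V] & \text{if } p_0\le (1-r)\mathbb{E}[V_{(1:2)}],\\ p_0+r\,\mathbb{E}[V_{(2:2)}]+p_0\Pr[V_{(1:2)}>p_0] & \text{if } (1-r)\mathbb{E}[V_{(1:2)}]<p_0\le(1-r)\mathbb{E}[V_{(2:2)}],\\ 2p_0\Pr[V>p_0] & \text{if } p_0>(1-r)\mathbb{E}[V_{(2:2)}],\end{cases}$$ and let $u_c^*=\sup_{p_0\ge0,r\in[0,1]}R(p_0,r)$, $u_{c,r=0}^*=\sup_{p_0\ge0}R(p_0,0)$. Then $u_c^*=2\mathbb{E}[V]=2/\lambda$ and $u_{c,r=0}^*=\frac{3}{2\lambda}\big(1+e^{-3}\big)$, so $\Delta:=u_c^*-u_{c,r=0}^*=\frac{e^3-3}{2\lambda e^3}>0$, and the relative increase $\mathcal{I}:=\Delta/u_{c,r=0}^*=\frac{e^3-3}{3(1+e^3)}\approx 0.27$ for all $\lambda\in(1,\infty)$.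
   Context: $R(p_0,r)$ is the expected revenue of a creator selling two identical NFTs at common mint price $p_0$ with royalty rate $r$, where a risk-neutral speculator buys 2, 1 or 0 units in the three price regions respectively, reselling to the highest-valuation end-buyers at their valuations, and unsold units are offered by the creator to remaining end-buyers at $p_0$. *)

theory Defs
  imports "HOL-Probability.Probability"
begin

text \<open>V1, V2 are the two independent
  copies of V on the probability space M; V is represented by V1.\<close>
definition revenue :: "'a measure \<Rightarrow> ('a \<Rightarrow> real) \<Rightarrow> ('a \<Rightarrow> real) \<Rightarrow> real \<Rightarrow> real \<Rightarrow> real" where
  "revenue M V1 V2 p0 r =
     (let EV = integral\<^sup>L M V1;
          Emin = integral\<^sup>L M (\<lambda>\<omega>. min (V1 \<omega>) (V2 \<omega>));
          Emax = integral\<^sup>L M (\<lambda>\<omega>. max (V1 \<omega>) (V2 \<omega>))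
      in if p0 \<le> (1 - r) * Emin then 2 * p0 + 2 * r * EV
         else if p0 \<le> (1 - r) * Emax then
           p0 + r * Emax + p0 * measure M {\<omega> \<in> space M. min (V1 \<omega>) (V2 \<omega>) > p0}
         else 2 * p0 * measure M {\<omega> \<in> space M. V1 \<omega> > p0})"

end

theory Submission
  imports Defs
begin

text \<open>For exponential valuations every ingredient of the revenue is explicit:
  \<open>E V = 1/\<lambda>\<close>, \<open>min V1 V2 \<sim> Exp(2\<lambda>)\<close>, hence \<open>E (max V1 V2) = 3/(2\<lambda>)\<close>, and
  \<open>Pr[V > p] = exp (-\<lambda>p)\<close>. The revenue is then \<open>1/\<lambda>\<close> times a function of \<open>\<lambda>p0\<close> and \<open>r\<close>
  alone, so it suffices to take \<open>\<lambda> = 1\<close>. There each of the three price regions yields at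
  most 2 (bounding the probability terms by \<open>x exp (-x) \<le> 1\<close>), with equality at \<open>p0 = 0, r = 1\<close>.
  Without royalties the middle region yields \<open>p + p exp (-2p)\<close>, which is nondecreasing and
  hence maximal at the region's right end \<open>p = 3/2\<close>; the other two regions yield at most
  \<open>1\<close> and \<open>2/e\<close>, both smaller.\<close>

lemma (in prob_space) exponential_distributed_integrable:
  "0 < l \<Longrightarrow> distributed M lborel X (exponential_density l) \<Longrightarrow> integrable M X"
  using erlang_ith_moment_integrable[of l X 0 1] by simp

lemma (in prob_space) exponential_distributed_max_expectation:
  assumes l: "0 < l" and u: "0 < u"
    and X: "distributed M lborel X (exponential_density l)"
    and Y: "distributed M lborel Y (exponential_density u)"
    and XY: "indep_var borel X borel Y"
  shows "expectation (\<lambda>x. max (X x) (Y x)) = 1 / l + 1 / u - 1 / (l + u)"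
proof -
  have min: "distributed M lborel (\<lambda>x. min (X x) (Y x)) (exponential_density (l + u))"
    using exponential_distributed_min[OF l u X Y XY] .
  have lu: "0 < l + u" using l u by simp
  have "(\<lambda>x. max (X x) (Y x)) = (\<lambda>x. X x + Y x - min (X x) (Y x))"
    by (auto simp: fun_eq_iff max_def min_def)
  then show ?thesis
    using exponential_distributed_integrable[OF l X] exponential_distributed_integrable[OF u Y]
      exponential_distributed_integrable[OF lu min]
      exponential_distributed_expectation[OF l X] exponential_distributed_expectation[OF u Y]
      exponential_distributed_expectation[OF lu min]
    by (simp add: integral_diff integral_add)
qed

definition exponential_revenue :: "real \<Rightarrow> real \<Rightarrow> real \<Rightarrow> real" where
  "exponential_revenue l p r =
     (if p \<le> (1 - r) / (2 * l) then 2 * p + 2 * r / l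
      else if p \<le> 3 * (1 - r) / (2 * l) then p + 3 * r / (2 * l) + p * exp (- 2 * l * p)
      else 2 * p * exp (- l * p))"

lemma revenue_exponential:
  assumes "prob_space M" and l: "0 < l"
    and V1: "distributed M lborel V1 (exponential_density l)"
    and V2: "distributed M lborel V2 (exponential_density l)"
    and V12: "prob_space.indep_var M borel V1 borel V2"
    and p: "0 \<le> p"
  shows "revenue M V1 V2 p r = exponential_revenue l p r"
proof -
  interpret prob_space M by fact
  have min: "distributed M lborel (\<lambda>x. min (V1 x) (V2 x)) (exponential_density (2 * l))"
    using exponential_distributed_min[OF l l V1 V2 V12] unfolding mult_2 .
  have EV: "expectation V1 = 1 / l"
    using exponential_distributed_expectation[OF l V1] .
  have Emin: "expectation (\<lambda>x. min (V1 x) (V2 x)) = 1 / (2 * l)"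
    using exponential_distributed_expectation[OF _ min] l by simp
  have Emax: "expectation (\<lambda>x. max (V1 x) (V2 x)) = 3 / (2 * l)"
    using exponential_distributed_max_expectation[OF l l V1 V2 V12] l by (simp add: field_simps)
  have P: "prob {x \<in> space M. V1 x > p} = exp (- l * p)"
    using exponential_distributedD_gt[OF V1 p l] by (simp add: mult.commute)
  have Pmin: "prob {x \<in> space M. min (V1 x) (V2 x) > p} = exp (- 2 * l * p)"
    using exponential_distributedD_gt[OF min p] l by (simp add: mult.commute)
  show ?thesis
    unfolding revenue_def Let_def EV Emin Emax P Pmin
    by (simp add: exponential_revenue_def mult.commute)
qed

lemma mult_exp_minus_le: "x * exp (- x) \<le> exp (- 1 :: real)"
proof -
  have "x \<le> exp (x - 1)"
    using exp_ge_add_one_self[of "x - 1"] by linarith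
  then have "x * exp (- x) \<le> exp (x - 1) * exp (- x)"
    by (simp add: mult_right_mono)
  then show ?thesis
    by (simp add: exp_add[symmetric])
qed

lemma mono_add_mult_exp_minus_double: "mono (\<lambda>x::real. x + x * exp (- 2 * x))"
proof (rule monoI, erule DERIV_nonneg_imp_nondecreasing)
  fix y :: real
  have "((\<lambda>x. x + x * exp (- 2 * x)) has_real_derivative 1 + (1 - 2 * y) * exp (- 2 * y)) (at y)"
    by (auto intro!: derivative_eq_intros simp: algebra_simps)
  moreover have "2 * y - 1 \<le> exp (2 * y)"
    using exp_ge_add_one_self[of "2 * y"] by linarith
  then have "(2 * y - 1) * exp (- 2 * y) \<le> exp (2 * y) * exp (- 2 * y)"
    by (simp add: mult_right_mono)
  then have "0 \<le> 1 + (1 - 2 * y) * exp (- 2 * y)"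
    by (simp add: exp_add[symmetric] algebra_simps)
  ultimately show "\<exists>d. ((\<lambda>x. x + x * exp (- 2 * x)) has_real_derivative d) (at y) \<and> 0 \<le> d"
    by blast
qed

lemma exponential_revenue_scale:
  assumes "0 < l"
  shows "exponential_revenue l p r = exponential_revenue 1 (l * p) r / l"
  using assms by (simp add: exponential_revenue_def field_simps)

lemma exponential_revenue_unit_le:
  assumes "0 \<le> r" "r \<le> 1"
  shows "exponential_revenue 1 x r \<le> 2"
proof -
  have "x * exp (- x) \<le> 1" for x :: real
    using mult_exp_minus_le[of x] by (simp add: order_trans)
  from this[of "2 * x"] this[of x] show ?thesis
    using assms by (auto simp: exponential_revenue_def)
qed

lemma exponential_revenue_unit_zero_royalty_le:
  "exponential_revenue 1 x 0 \<le> 3 / 2 * (1 + exp (- 3))"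
proof -
  have "exp (- 1 :: real) \<le> 3 / 4"
    using exp_ge_add_one_self[of 1] by (simp add: exp_minus field_simps)
  then have "2 * x * exp (- x) \<le> 3 / 2"
    using mult_exp_minus_le[of x] by simp
  moreover have "x + x * exp (- 2 * x) \<le> 3 / 2 * (1 + exp (- 3))" if "x \<le> 3 / 2"
    using monoD[OF mono_add_mult_exp_minus_double that] by simp
  ultimately show ?thesis
    unfolding exponential_revenue_def by simp (smt (verit) exp_gt_zero)
qed

lemma exponential_revenue_Sup:
  assumes l: "0 < l"
  shows "Sup ((\<lambda>(p, r). exponential_revenue l p r) ` ({0..} \<times> {0..1})) = 2 / l"
proof (rule cSup_eq_maximum)
  show "2 / l \<in> (\<lambda>(p, r). exponential_revenue l p r) ` ({0..} \<times> {0..1})"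
    by (force simp: exponential_revenue_def intro!: image_eqI[of _ _ "(0, 1)"])
next
  fix x assume "x \<in> (\<lambda>(p, r). exponential_revenue l p r) ` ({0..} \<times> {0..1})"
  then obtain p r where "x = exponential_revenue l p r" "0 \<le> r" "r \<le> 1" by auto
  then show "x \<le> 2 / l"
    using exponential_revenue_scale[OF l] l
      divide_right_mono[OF exponential_revenue_unit_le, of r l "l * p"]
    by simp
qed

lemma exponential_revenue_zero_royalty_Sup:
  assumes l: "0 < l"
  shows "Sup ((\<lambda>p. exponential_revenue l p 0) ` {0..}) = 3 / 2 * (1 + exp (- 3)) / l"
proof (rule cSup_eq_maximum)
  have "exponential_revenue l (3 / (2 * l)) 0 = 3 / 2 * (1 + exp (- 3)) / l"
    using l by (simp add: exponential_revenue_def field_simps)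
  then show "3 / 2 * (1 + exp (- 3)) / l \<in> (\<lambda>p. exponential_revenue l p 0) ` {0..}"
    using l by (force intro!: image_eqI[of _ _ "3 / (2 * l)"])
next
  fix x assume "x \<in> (\<lambda>p. exponential_revenue l p 0) ` {0..}"
  then obtain p where "x = exponential_revenue l p 0" by auto
  then show "x \<le> 3 / 2 * (1 + exp (- 3)) / l"
    using exponential_revenue_scale[OF l] l
      divide_right_mono[OF exponential_revenue_unit_zero_royalty_le, of l "l * p"]
    by simp
qed

theorem lemma5:
  fixes M :: "'a measure" and V1 V2 :: "'a \<Rightarrow> real" and l :: real
  assumes "prob_space M"
    and "l > 1"
    and "distributed M lborel V1 (exponential_density l)"
    and "distributed M lborel V2 (exponential_density l)"
    and "prob_space.indep_var M borel V1 borel V2"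
  shows "let uc = Sup ((\<lambda>(p0, r). revenue M V1 V2 p0 r) ` ({0..} \<times> {0..1}));
             uc0 = Sup ((\<lambda>p0. revenue M V1 V2 p0 0) ` {0..});
             \<Delta> = uc - uc0;
             I = \<Delta> / uc0
         in uc = 2 * integral\<^sup>L M V1 \<and> uc = 2 / l
            \<and> uc0 = 3 / (2 * l) * (1 + exp (-3))
            \<and> \<Delta> = (exp 3 - 3) / (2 * l * exp 3) \<and> \<Delta> > 0
            \<and> I = (exp 3 - 3) / (3 * (1 + exp 3))"
proof -
  have l: "0 < l" using \<open>l > 1\<close> by simp
  note R = revenue_exponential[OF assms(1) l assms(3-5)]
  have "(\<lambda>(p0, r). revenue M V1 V2 p0 r) ` ({0..} \<times> {0..1})
      = (\<lambda>(p, r). exponential_revenue l p r) ` ({0..} \<times> {0..1})"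
    by (rule image_cong) (auto simp: R)
  then have uc: "Sup ((\<lambda>(p0, r). revenue M V1 V2 p0 r) ` ({0..} \<times> {0..1})) = 2 / l"
    using exponential_revenue_Sup[OF l] by simp
  have "(\<lambda>p0. revenue M V1 V2 p0 0) ` {0..} = (\<lambda>p. exponential_revenue l p 0) ` {0..}"
    by (rule image_cong) (auto simp: R)
  then have uc0: "Sup ((\<lambda>p0. revenue M V1 V2 p0 0) ` {0..}) = 3 / 2 * (1 + exp (- 3)) / l"
    using exponential_revenue_zero_royalty_Sup[OF l] by simp
  have EV: "integral\<^sup>L M V1 = 1 / l"
    using prob_space.exponential_distributed_expectation[OF assms(1) l assms(3)] .
  define E where "E = exp (3 :: real)"
  have E: "3 < E"
    using exp_ge_add_one_self[of 3] by (simp add: E_def)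
  have exp_minus_3: "exp (- 3) = 1 / E"
    by (simp add: E_def exp_minus inverse_eq_divide)
  have \<Delta>: "2 / l - 3 / 2 * (1 + 1 / E) / l = (E - 3) / (2 * l * E)"
    using l E by (simp add: field_simps)
  show ?thesis
    unfolding uc uc0 EV Let_def exp_minus_3 E_def[symmetric] \<Delta>
  proof (intro conjI)
    show "(E - 3) / (2 * l * E) / (3 / 2 * (1 + 1 / E) / l) = (E - 3) / (3 * (1 + E))"
      using l E by (simp add: divide_simps)
  qed (use l E in simp_all)
qed

end
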